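(* Let $(\phi,F)$ be a special Kähler pair defined on an open subset $U$ of an affine special Kähler manifold, $(z,w):=\phi$, $f:=2F-z^tw$ and $K:=\frac12\gamma(\phi,\phi)$. Then $(\phi,F)$ is non-degenerate if and only if $\mathrm{Im}\,f+K\neq0$ on $U$ and the real $(1,1)$-form $\bar\omega:=\frac{\sqrt{-1}}2\partial\bar\partial\log|\mathrm{Im}\,f+K|$ is non-degenerate on $U$.
   Context: $\mathbb{C}^{2n}$: coordinates $(z,w)$, $\Omega=\sum dz^i\wedge dw_i$, $\gamma=\sqrt{-1}\Omega(\cdot,\bar\cdot)$ (so $\frac12\gamma(\phi,\phi)=\sum_i\mathrm{Im}(\bar z^iw_i)$), $\lambda=\sum w_idz^i$; $\mathbb{C}^{2n+2}$: coordinates $(z^0,w_0,z,w)$, $\hat\Omega=dz^0\wedge dw_0+\Omega$, $\hat\gamma=\sqrt{-1}\hat\Omega(\cdot,\bar\cdot)$. A special Kähler pair $(\phi,F)$ of $U$: $\phi:U\to\mathbb{C}^{2n}$ holomorphic immersion with $\phi^*\Omega=0$ and $\phi^*\gamma$ non-degenerate, inducing the affine special Kähler structure of $U$, and holomorphic $F$ with $dF=\phi^*\lambda$. Its conification is $\Phi:\mathbb{C}^*\times U\to\mathbb{C}^{2n+2}$, $\Phi(z^0,p)=z^0(1,(2F-z^tw)(p),\phi(p))$; $(\phi,F)$ is non-degenerate if $\Phi^*\hat\gamma$ is non-degenerate and $\hat\gamma(\Phi,\Phi)\neq0$ everywhere. *)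

theory Defs
  imports "HOL-Analysis.Analysis"
begin

(* Points of U lie in C^m = complex^'m (a holomorphic chart of the affine special
   Kaehler manifold); C^{2n} = complex^'n * complex^'n with coordinates (z,w);
   C^{2n+2} = complex * complex * complex^'n * complex^'n with coordinates (z0,w0,z,w).
   Real tangent vectors at points of U are identified with elements of complex^'m
   (resp. complex * complex^'m for C^* x U); differentials are real Frechet derivatives. *)

definition holo_vec :: "(complex^'m) set \<Rightarrow> (complex^'m \<Rightarrow> complex^'k) \<Rightarrow> bool" where
  "holo_vec U f \<longleftrightarrow> (\<forall>p\<in>U. f differentiable (at p) \<and>
     (\<forall>v. frechet_derivative f (at p) (\<i> *s v) = \<i> *s frechet_derivative f (at p) v))"

definition holo_fun :: "(complex^'m) set \<Rightarrow> (complex^'m \<Rightarrow> complex) \<Rightarrow> bool" where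
  "holo_fun U f \<longleftrightarrow> (\<forall>p\<in>U. f differentiable (at p) \<and>
     (\<forall>v. frechet_derivative f (at p) (\<i> *s v) = \<i> * frechet_derivative f (at p) v))"

definition Omega :: "(complex^'n) \<times> (complex^'n) \<Rightarrow> (complex^'n) \<times> (complex^'n) \<Rightarrow> complex" where
  "Omega u v = (\<Sum>i\<in>UNIV. (fst u)$i * (snd v)$i - (fst v)$i * (snd u)$i)"

definition conj_pt :: "(complex^'n) \<times> (complex^'n) \<Rightarrow> (complex^'n) \<times> (complex^'n)" where
  "conj_pt v = ((\<chi> i. cnj ((fst v)$i)), (\<chi> i. cnj ((snd v)$i)))"

definition gamma :: "(complex^'n) \<times> (complex^'n) \<Rightarrow> (complex^'n) \<times> (complex^'n) \<Rightarrow> complex" where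
  "gamma u v = \<i> * Omega u (conj_pt v)"

definition Omega_hat :: "complex \<times> complex \<times> (complex^'n) \<times> (complex^'n)
     \<Rightarrow> complex \<times> complex \<times> (complex^'n) \<times> (complex^'n) \<Rightarrow> complex" where
  "Omega_hat u v = (case u of (z0, w0, z, w) \<Rightarrow> case v of (z0', w0', z', w') \<Rightarrow>
      z0 * w0' - z0' * w0 + Omega (z, w) (z', w'))"

definition gamma_hat :: "complex \<times> complex \<times> (complex^'n) \<times> (complex^'n)
     \<Rightarrow> complex \<times> complex \<times> (complex^'n) \<times> (complex^'n) \<Rightarrow> complex" where
  "gamma_hat u v = (case v of (z0', w0', z', w') \<Rightarrow>
      \<i> * Omega_hat u (cnj z0', cnj w0', (\<chi> i. cnj (z'$i)), (\<chi> i. cnj (w'$i))))"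

definition nondeg :: "('v::zero \<Rightarrow> 'v \<Rightarrow> 'c::zero) \<Rightarrow> bool" where
  "nondeg B \<longleftrightarrow> (\<forall>X. (\<forall>Y. B X Y = 0) \<longrightarrow> X = 0)"

definition sk_pair :: "(complex^'m) set \<Rightarrow> (complex^'m \<Rightarrow> complex^'n) \<Rightarrow> (complex^'m \<Rightarrow> complex^'n)
     \<Rightarrow> (complex^'m \<Rightarrow> complex) \<Rightarrow> bool" where
  "sk_pair U z w F \<longleftrightarrow> open U \<and> holo_vec U z \<and> holo_vec U w \<and> holo_fun U F \<and>
     (\<forall>p\<in>U.
        \<comment> \<open>immersion\<close>
        inj (\<lambda>v. (frechet_derivative z (at p) v, frechet_derivative w (at p) v)) \<and>
        \<comment> \<open>phi^* Omega = 0\<close>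
        (\<forall>u v. Omega (frechet_derivative z (at p) u, frechet_derivative w (at p) u)
                      (frechet_derivative z (at p) v, frechet_derivative w (at p) v) = 0) \<and>
        \<comment> \<open>phi^* gamma non-degenerate\<close>
        nondeg (\<lambda>u v. gamma (frechet_derivative z (at p) u, frechet_derivative w (at p) u)
                             (frechet_derivative z (at p) v, frechet_derivative w (at p) v)) \<and>
        \<comment> \<open>dF = phi^* lambda, lambda = sum w_i dz^i\<close>
        (\<forall>v. frechet_derivative F (at p) v = (\<Sum>i\<in>UNIV. (w p)$i * (frechet_derivative z (at p) v)$i)))"

definition fpot :: "(complex^'m \<Rightarrow> complex^'n) \<Rightarrow> (complex^'m \<Rightarrow> complex^'n)
     \<Rightarrow> (complex^'m \<Rightarrow> complex) \<Rightarrow> complex^'m \<Rightarrow> complex" where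
  "fpot z w F p = 2 * F p - (\<Sum>i\<in>UNIV. (z p)$i * (w p)$i)"

definition conif :: "(complex^'m \<Rightarrow> complex^'n) \<Rightarrow> (complex^'m \<Rightarrow> complex^'n)
     \<Rightarrow> (complex^'m \<Rightarrow> complex) \<Rightarrow> complex \<times> (complex^'m)
     \<Rightarrow> complex \<times> complex \<times> (complex^'n) \<times> (complex^'n)" where
  "conif z w F q = (case q of (z0, p) \<Rightarrow> (z0, z0 * fpot z w F p, z0 *s z p, z0 *s w p))"

definition sk_nondegenerate :: "(complex^'m) set \<Rightarrow> (complex^'m \<Rightarrow> complex^'n) \<Rightarrow> (complex^'m \<Rightarrow> complex^'n)
     \<Rightarrow> (complex^'m \<Rightarrow> complex) \<Rightarrow> bool" where
  "sk_nondegenerate U z w F \<longleftrightarrow> (\<forall>z0 p. z0 \<noteq> 0 \<longrightarrow> p \<in> U \<longrightarrow>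
      nondeg (\<lambda>X Y. gamma_hat (frechet_derivative (conif z w F) (at (z0, p)) X)
                               (frechet_derivative (conif z w F) (at (z0, p)) Y)) \<and>
      gamma_hat (conif z w F (z0, p)) (conif z w F (z0, p)) \<noteq> 0)"

definition dir_deriv :: "(complex^'m \<Rightarrow> complex) \<Rightarrow> complex^'m \<Rightarrow> complex^'m \<Rightarrow> complex" where
  "dir_deriv g p v = vector_derivative (\<lambda>t::real. g (p + t *\<^sub>R v)) (at 0)"

definition wirt_d :: "'m \<Rightarrow> (complex^'m \<Rightarrow> complex) \<Rightarrow> complex^'m \<Rightarrow> complex" where
  "wirt_d a g p = (dir_deriv g p (axis a 1) - \<i> * dir_deriv g p (axis a \<i>)) / 2"

definition wirt_dbar :: "'m \<Rightarrow> (complex^'m \<Rightarrow> complex) \<Rightarrow> complex^'m \<Rightarrow> complex" where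
  "wirt_dbar a g p = (dir_deriv g p (axis a 1) + \<i> * dir_deriv g p (axis a \<i>)) / 2"

(* the 2-form  d dbar g = sum_{a,b} d_a dbar_b g dz^a /\ dzbar^b  evaluated on real tangent vectors *)
definition ddbar :: "(complex^'m \<Rightarrow> complex) \<Rightarrow> complex^'m \<Rightarrow> complex^'m \<Rightarrow> complex^'m \<Rightarrow> complex" where
  "ddbar g p X Y = (\<Sum>a\<in>UNIV. \<Sum>b\<in>UNIV. wirt_d a (wirt_dbar b g) p *
      (X$a * cnj (Y$b) - Y$a * cnj (X$b)))"

definition Kpot :: "(complex^'m \<Rightarrow> complex^'n) \<Rightarrow> (complex^'m \<Rightarrow> complex^'n) \<Rightarrow> complex^'m \<Rightarrow> real" where
  "Kpot z w p = Re (gamma (z p, w p) (z p, w p) / 2)"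

definition omega_bar :: "(complex^'m \<Rightarrow> complex^'n) \<Rightarrow> (complex^'m \<Rightarrow> complex^'n)
     \<Rightarrow> (complex^'m \<Rightarrow> complex) \<Rightarrow> complex^'m \<Rightarrow> complex^'m \<Rightarrow> complex^'m \<Rightarrow> complex" where
  "omega_bar z w F p X Y = (\<i> / 2) *
     ddbar (\<lambda>q. complex_of_real (ln \<bar>Im (fpot z w F q) + Kpot z w q\<bar>)) p X Y"

end

theory Submission
  imports Defs "HOL-Complex_Analysis.Cauchy_Integral_Formula"
begin

text \<open>
  The conification is the cone \<Phi>(z0, p) = z0 \<psi>(p) over the lift \<psi> = (1, f, \<phi>). At (z0, p) the
  pull-back of the hermitian form gamma_hat is a block form on C \<oplus> T_pU whose corner is
  \<kappa> = gamma_hat(\<psi>, \<psi>) = 2 (Im f + K), with off-diagonal entries gamma_hat(d\<psi>, \<psi>) and lower block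
  gamma_hat(d\<psi>, d\<psi>), scaled by z0; moreover gamma_hat(\<Phi>, \<Phi>) = |z0|^2 \<kappa>. For \<kappa> \<noteq> 0 such
  a form is non-degenerate iff the Schur complement
  S = gamma_hat(d\<psi>, d\<psi>) - gamma_hat(d\<psi>, \<psi>) gamma_hat(\<psi>, d\<psi>) / \<kappa> is. Since \<psi> is holomorphic, two Wirtinger derivatives of log |Im f + K| give exactly S / \<kappa>, so
  omega_bar = - Im (S / \<kappa>), which is non-degenerate iff S is, S being antilinear in its second slot.
\<close>

section \<open>Circle integrals depending holomorphically on a parameter\<close>

lemma continuous_on_contour_integral_param:
  fixes f :: "'a::topological_space \<Rightarrow> complex \<Rightarrow> complex"
  assumes f: "continuous_on (S \<times> path_image g) (\<lambda>(x, y). f x y)"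
    and g': "continuous_on {0..1} (\<lambda>t. vector_derivative g (at t))"
    and g: "path g"
  shows "continuous_on S (\<lambda>x. contour_integral g (f x))"
proof -
  have "continuous_on (S \<times> cbox 0 1) (\<lambda>x. f (fst x) (g (snd x)))"
    by (rule continuous_on_compose_Pair[OF f continuous_on_fst[OF continuous_on_id]
          continuous_on_compose2[of "{0..1}" g, OF _ continuous_on_snd[OF continuous_on_id]]])
       (use g in \<open>auto simp: path_def path_image_def\<close>)
  moreover have "continuous_on (S \<times> cbox 0 1) (\<lambda>x. vector_derivative g (at (snd x)))"
    by (rule continuous_on_compose2[OF g' continuous_on_snd[OF continuous_on_id]]) auto
  ultimately have "continuous_on (S \<times> cbox 0 1) (\<lambda>(x, t). f x (g t) * vector_derivative g (at t))"
    by (simp add: split_beta continuous_on_mult)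
  from integral_continuous_on_param[OF this] show ?thesis
    by (simp add: contour_integral_integral)
qed

lemma contour_integral_triangle_eq_0:
  assumes "f holomorphic_on convex hull {a, b, c}"
  shows "contour_integral (linepath a b) f + contour_integral (linepath b c) f
           + contour_integral (linepath c a) f = 0"
proof -
  have int: "(f has_contour_integral contour_integral (linepath x y) f) (linepath x y)"
    if "closed_segment x y \<subseteq> convex hull {a, b, c}" for x y
    using that assms
    by (intro has_contour_integral_integral contour_integrable_continuous_linepath)
       (auto intro: continuous_on_subset holomorphic_on_imp_continuous_on)
  have "(f has_contour_integral contour_integral (linepath a b) f
          + (contour_integral (linepath b c) f + contour_integral (linepath c a) f))
        (linepath a b +++ linepath b c +++ linepath c a)"
    by (intro has_contour_integral_join int segments_subset_convex_hull) auto
  with Cauchy_theorem_triangle[OF assms] show ?thesis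
    by (simp add: add.assoc has_contour_integral_unique)
qed

lemma contour_integral_linepath_circlepath_swap:
  fixes \<phi> :: "complex \<Rightarrow> complex \<Rightarrow> complex"
  assumes cont: "continuous_on (closed_segment x y \<times> sphere c r) (\<lambda>(s, t). \<phi> s t)" and r: "0 \<le> r"
  shows "contour_integral (linepath x y) (\<lambda>s. contour_integral (circlepath c r) (\<phi> s))
           = contour_integral (circlepath c r) (\<lambda>t. contour_integral (linepath x y) (\<lambda>s. \<phi> s t))"
    and "(\<lambda>t. contour_integral (linepath x y) (\<lambda>s. \<phi> s t)) contour_integrable_on circlepath c r"
proof -
  have C': "continuous_on {0..1} (\<lambda>t. vector_derivative (circlepath c r) (at t))"
    unfolding vector_derivative_circlepath by (intro continuous_intros)
  have img: "path_image (circlepath c r) = sphere c r"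
    using r by (simp add: path_image_circlepath_nonneg)
  show "contour_integral (linepath x y) (\<lambda>s. contour_integral (circlepath c r) (\<phi> s))
          = contour_integral (circlepath c r) (\<lambda>t. contour_integral (linepath x y) (\<lambda>s. \<phi> s t))"
    by (rule contour_integral_swap) (use cont img C' in auto)
  have "continuous_on (sphere c r) (\<lambda>t. contour_integral (linepath x y) (\<lambda>s. \<phi> s t))"
    by (rule continuous_on_contour_integral_param) (use continuous_on_swap_args[OF cont] in auto)
  then show "(\<lambda>t. contour_integral (linepath x y) (\<lambda>s. \<phi> s t)) contour_integrable_on circlepath c r"
    using img by (intro contour_integrable_continuous_circlepath) simp
qed

lemma holomorphic_on_contour_integral_circlepath_param:
  fixes \<phi> :: "complex \<Rightarrow> complex \<Rightarrow> complex"
  assumes S: "open S"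
    and cont: "continuous_on (S \<times> sphere c r) (\<lambda>(s, t). \<phi> s t)"
    and hol: "\<And>t. t \<in> sphere c r \<Longrightarrow> (\<lambda>s. \<phi> s t) holomorphic_on S"
    and r: "0 \<le> r"
  shows "(\<lambda>s. contour_integral (circlepath c r) (\<phi> s)) holomorphic_on S"
proof -
  let ?C = "circlepath c r"
  let ?I = "\<lambda>x y t. contour_integral (linepath x y) (\<lambda>s. \<phi> s t)"
  note swap = contour_integral_linepath_circlepath_swap[OF continuous_on_subset[OF cont] r]
  have "continuous_on S (\<lambda>s. contour_integral ?C (\<phi> s))"
    by (rule continuous_on_contour_integral_param)
       (use cont r in \<open>auto simp: path_image_circlepath_nonneg vector_derivative_circlepath
          intro!: continuous_intros\<close>)
  then have "(\<lambda>s. contour_integral ?C (\<phi> s)) analytic_on S"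
  proof (rule Morera_triangle[OF _ S], intro allI impI)
    fix a b c' assume hull: "convex hull {a, b, c'} \<subseteq> S"
    have segs: "closed_segment a b \<times> sphere c r \<subseteq> S \<times> sphere c r"
      "closed_segment b c' \<times> sphere c r \<subseteq> S \<times> sphere c r" "closed_segment c' a \<times> sphere c r \<subseteq> S \<times> sphere c r"
      using order_trans[OF segments_subset_convex_hull(1) hull] order_trans[OF segments_subset_convex_hull(3) hull]
        order_trans[OF segments_subset_convex_hull(5) hull] by auto
    have "contour_integral ?C (?I a b) + contour_integral ?C (?I b c') + contour_integral ?C (?I c' a)
        = contour_integral ?C (\<lambda>t. ?I a b t + ?I b c' t + ?I c' a t)"
      using swap(2)[OF segs(1)] swap(2)[OF segs(2)] swap(2)[OF segs(3)]
      by (simp only: contour_integral_add contour_integrable_add)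
    also have "\<dots> = contour_integral ?C (\<lambda>t. 0)"
    proof (rule contour_integral_cong)
      fix t assume "t \<in> path_image ?C"
      then show "?I a b t + ?I b c' t + ?I c' a t = 0"
        using r by (intro contour_integral_triangle_eq_0 holomorphic_on_subset[OF hol hull])
          (auto simp: path_image_circlepath_nonneg)
    qed simp
    also have "\<dots> = 0"
      by simp
    finally show "contour_integral (linepath a b) (\<lambda>s. contour_integral ?C (\<phi> s))
        + contour_integral (linepath b c') (\<lambda>s. contour_integral ?C (\<phi> s))
        + contour_integral (linepath c' a) (\<lambda>s. contour_integral ?C (\<phi> s)) = 0"
      by (simp only: swap(1)[OF segs(1)] swap(1)[OF segs(2)] swap(1)[OF segs(3)])
  qed
  then show ?thesis
    by (rule analytic_imp_holomorphic)
qed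

section \<open>Holomorphic functions of several variables\<close>

lemma vector_smult_complex_decompose: "c *s (x::complex^'m) = Re c *\<^sub>R x + Im c *\<^sub>R (\<i> *s x)"
proof -
  have *: "c * y = complex_of_real (Re c) * y + complex_of_real (Im c) * (\<i> * y)" for y
    by (subst complex_eq[of c]) (simp add: algebra_simps)
  show ?thesis
    unfolding vec_eq_iff
  proof
    fix i
    show "(c *s x) $ i = (Re c *\<^sub>R x + Im c *\<^sub>R (\<i> *s x)) $ i"
      using *[of "x $ i"]
      unfolding vector_add_component vector_scaleR_component vector_smult_component
      by (simp only: scaleR_conv_of_real)
  qed
qed

lemma linear_complex_homogeneous:
  fixes D :: "complex^'m \<Rightarrow> complex"
  assumes "linear D" and "\<And>v. D (\<i> *s v) = \<i> * D v"
  shows "D (c *s v) = c * D v"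
proof -
  have "D (c *s v) = Re c *\<^sub>R D v + Im c *\<^sub>R D (\<i> *s v)"
    by (subst vector_smult_complex_decompose) (simp only: linear_add[OF assms(1)] linear_scale[OF assms(1)])
  also have "\<dots> = c * D v"
    using assms(2) by (subst (3) complex_eq[of c]) (simp add: scaleR_conv_of_real algebra_simps)
  finally show ?thesis .
qed

lemma norm_vector_smult: "norm (c *s (x::complex^'m)) = norm c * norm x"
  unfolding norm_vec_def by (simp add: norm_mult L2_set_right_distrib)

lemma bounded_bilinear_vector_smult: "bounded_bilinear (\<lambda>(c::complex) (x::complex^'m). c *s x)"
proof
  show "\<exists>K. \<forall>a b. norm (a *s (b::complex^'m)) \<le> norm a * norm b * K"
    by (rule exI[of _ 1]) (simp add: norm_vector_smult)
qed (simp_all add: vec_eq_iff algebra_simps)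

lemma holo_funI:
  fixes g :: "complex^'m \<Rightarrow> complex"
  assumes "\<And>p. p \<in> U \<Longrightarrow> (g has_derivative D p) (at p)"
    and "\<And>p v. p \<in> U \<Longrightarrow> D p (\<i> *s v) = \<i> * D p v"
  shows "holo_fun U g"
  unfolding holo_fun_def
proof (intro ballI conjI allI)
  fix p v assume p: "p \<in> U"
  show "g differentiable at p"
    using assms(1)[OF p] by (auto simp: differentiable_def)
  show "frechet_derivative g (at p) (\<i> *s v) = \<i> * frechet_derivative g (at p) v"
    using assms(2)[OF p] by (simp add: frechet_derivative_at[OF assms(1)[OF p], symmetric])
qed

lemma holo_fun_has_derivative:
  "holo_fun U g \<Longrightarrow> p \<in> U \<Longrightarrow> (g has_derivative frechet_derivative g (at p)) (at p)"
  by (simp add: holo_fun_def frechet_derivative_works)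

lemma holo_fun_deriv_i:
  "holo_fun U g \<Longrightarrow> p \<in> U \<Longrightarrow> frechet_derivative g (at p) (\<i> *s v) = \<i> * frechet_derivative g (at p) v"
  by (simp add: holo_fun_def)

lemma holo_fun_deriv_smult:
  assumes "holo_fun U g" "p \<in> U"
  shows "frechet_derivative g (at p) (c *s v) = c * frechet_derivative g (at p) v"
  using has_derivative_linear[OF holo_fun_has_derivative[OF assms]] holo_fun_deriv_i[OF assms]
  by (rule linear_complex_homogeneous)

lemma holo_fun_deriv_expand:
  assumes "holo_fun U g" "q \<in> U"
  shows "frechet_derivative g (at q) x = (\<Sum>a\<in>UNIV. x$a * frechet_derivative g (at q) (axis a 1))"
proof -
  have "frechet_derivative g (at q) x = frechet_derivative g (at q) (\<Sum>a\<in>UNIV. (x$a) *s axis a 1)"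
    by (simp add: basis_expansion)
  also have "\<dots> = (\<Sum>a\<in>UNIV. frechet_derivative g (at q) ((x$a) *s axis a 1))"
    by (rule linear_sum[OF has_derivative_linear[OF holo_fun_has_derivative[OF assms]]])
  also have "\<dots> = (\<Sum>a\<in>UNIV. x$a * frechet_derivative g (at q) (axis a 1))"
    by (simp add: holo_fun_deriv_smult[OF assms])
  finally show ?thesis .
qed

lemma axis_i_eq: "axis b \<i> = \<i> *s axis b (1::complex)"
  by (simp add: vec_eq_iff axis_def)

lemma holo_fun_continuous_on: "holo_fun U g \<Longrightarrow> continuous_on U g"
  by (intro continuous_at_imp_continuous_on ballI has_derivative_continuous[OF holo_fun_has_derivative])

lemma holo_fun_const: "holo_fun U (\<lambda>q. c)"
  by (rule holo_funI[where D = "\<lambda>p v. 0"]) auto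

lemma holo_fun_add:
  assumes g: "holo_fun U g" and h: "holo_fun U h"
  shows "holo_fun U (\<lambda>q. g q + h q)"
proof (rule holo_funI)
  fix p assume p: "p \<in> U"
  show "((\<lambda>q. g q + h q) has_derivative (\<lambda>v. frechet_derivative g (at p) v + frechet_derivative h (at p) v)) (at p)"
    by (intro has_derivative_add holo_fun_has_derivative[OF g p] holo_fun_has_derivative[OF h p])
  fix v
  show "(\<lambda>v. frechet_derivative g (at p) v + frechet_derivative h (at p) v) (\<i> *s v) = \<i> * (\<lambda>v. frechet_derivative g (at p) v + frechet_derivative h (at p) v) v"
    by (simp add: holo_fun_deriv_i[OF g p] holo_fun_deriv_i[OF h p] distrib_left)
qed

lemma holo_fun_diff:
  assumes g: "holo_fun U g" and h: "holo_fun U h"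
  shows "holo_fun U (\<lambda>q. g q - h q)"
proof (rule holo_funI)
  fix p assume p: "p \<in> U"
  show "((\<lambda>q. g q - h q) has_derivative (\<lambda>v. frechet_derivative g (at p) v - frechet_derivative h (at p) v)) (at p)"
    by (intro has_derivative_diff holo_fun_has_derivative[OF g p] holo_fun_has_derivative[OF h p])
  fix v
  show "(\<lambda>v. frechet_derivative g (at p) v - frechet_derivative h (at p) v) (\<i> *s v) = \<i> * (\<lambda>v. frechet_derivative g (at p) v - frechet_derivative h (at p) v) v"
    by (simp add: holo_fun_deriv_i[OF g p] holo_fun_deriv_i[OF h p] right_diff_distrib)
qed

lemma holo_fun_mult:
  assumes g: "holo_fun U g" and h: "holo_fun U h"
  shows "holo_fun U (\<lambda>q. g q * h q)"
proof (rule holo_funI)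
  fix p assume p: "p \<in> U"
  show "((\<lambda>q. g q * h q) has_derivative (\<lambda>v. g p * frechet_derivative h (at p) v + frechet_derivative g (at p) v * h p)) (at p)"
    by (intro has_derivative_mult holo_fun_has_derivative[OF g p] holo_fun_has_derivative[OF h p])
  fix v
  show "(\<lambda>v. g p * frechet_derivative h (at p) v + frechet_derivative g (at p) v * h p) (\<i> *s v) = \<i> * (\<lambda>v. g p * frechet_derivative h (at p) v + frechet_derivative g (at p) v * h p) v"
    by (simp add: holo_fun_deriv_i[OF g p] holo_fun_deriv_i[OF h p] algebra_simps)
qed

lemma holo_fun_sum: "(\<And>i. i \<in> I \<Longrightarrow> holo_fun U (g i)) \<Longrightarrow> holo_fun U (\<lambda>q. \<Sum>i\<in>I. g i q)"
  by (induction I rule: infinite_finite_induct) (auto intro: holo_fun_const holo_fun_add)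

lemma holo_vec_has_derivative:
  "holo_vec U z \<Longrightarrow> p \<in> U \<Longrightarrow> (z has_derivative frechet_derivative z (at p)) (at p)"
  by (simp add: holo_vec_def frechet_derivative_works)

lemma holo_vec_continuous_on: "holo_vec U z \<Longrightarrow> continuous_on U z"
  by (intro continuous_at_imp_continuous_on ballI has_derivative_continuous[OF holo_vec_has_derivative])

lemma holo_vec_nth_has_derivative:
  "holo_vec U z \<Longrightarrow> p \<in> U \<Longrightarrow>
     ((\<lambda>q. z q $ i) has_derivative (\<lambda>v. frechet_derivative z (at p) v $ i)) (at p)"
  using bounded_linear.has_derivative[OF bounded_linear_vec_nth holo_vec_has_derivative] .

lemma frechet_derivative_holo_vec_nth:
  "holo_vec U z \<Longrightarrow> p \<in> U \<Longrightarrow>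
     frechet_derivative (\<lambda>q. z q $ i) (at p) v = frechet_derivative z (at p) v $ i"
  by (simp add: frechet_derivative_at[OF holo_vec_nth_has_derivative, symmetric])

lemma holo_fun_holo_vec_nth: "holo_vec U z \<Longrightarrow> holo_fun U (\<lambda>q. z q $ i)"
  by (rule holo_funI[OF holo_vec_nth_has_derivative]) (auto simp: holo_vec_def)

lemma holo_fun_fpot:
  "holo_vec U z \<Longrightarrow> holo_vec U w \<Longrightarrow> holo_fun U F \<Longrightarrow> holo_fun U (fpot z w F)"
  unfolding fpot_def[abs_def]
  by (intro holo_fun_diff holo_fun_mult holo_fun_const holo_fun_sum holo_fun_holo_vec_nth)

lemma holo_fun_has_field_derivative_line:
  assumes "holo_fun U g" "a + s0 *s u \<in> U"
  shows "((\<lambda>s. g (a + s *s u)) has_field_derivative frechet_derivative g (at (a + s0 *s u)) u) (at s0)"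
proof -
  have "((\<lambda>s. a + s *s u) has_derivative (\<lambda>h. h *s u)) (at s0)"
    using has_derivative_add[OF has_derivative_const bounded_linear_imp_has_derivative
        [OF bounded_bilinear.bounded_linear_left[OF bounded_bilinear_vector_smult]]] by simp
  from has_derivative_compose[OF this holo_fun_has_derivative[OF assms]]
  have "((\<lambda>s. g (a + s *s u)) has_derivative (\<lambda>h. h * frechet_derivative g (at (a + s0 *s u)) u)) (at s0)"
    by (simp add: holo_fun_deriv_smult[OF assms] o_def)
  moreover have "(\<lambda>h. h * c) = (*) c" for c :: complex
    by (simp add: fun_eq_iff mult.commute)
  ultimately show ?thesis
    unfolding has_field_derivative_def by simp
qed

lemma open_contains_complex_bidisc:
  fixes U :: "(complex^'m) set"
  assumes "open U" "q \<in> U"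
  obtains R where "R > 0" "\<And>s t. norm s \<le> R \<Longrightarrow> norm t \<le> R \<Longrightarrow> q + s *s u + t *s v \<in> U"
proof -
  define P where "P = (\<lambda>st::complex \<times> complex. q + fst st *s u + snd st *s v)"
  have "continuous_on UNIV P"
    unfolding P_def by (intro continuous_intros linear_continuous_on bounded_linear_compose
        [OF bounded_bilinear.bounded_linear_left[OF bounded_bilinear_vector_smult]]
        bounded_linear_fst bounded_linear_snd)
  then have "open (P -` U)"
    by (rule open_vimage[OF assms(1)])
  moreover have "(0, 0) \<in> P -` U"
    using assms(2) by (simp add: P_def)
  ultimately obtain e where e: "e > 0" "ball (0, 0) e \<subseteq> P -` U"
    by (meson open_contains_ball)
  show ?thesis
  proof (rule that[of "e / 3"])
    fix s t :: complex assume "norm s \<le> e / 3" "norm t \<le> e / 3"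
    then have "norm (s, t) < e"
      using norm_Pair_le[of s t] e(1) by linarith
    then have "(s, t) \<in> ball (0, 0) e"
      by (simp add: dist_norm norm_Pair)
    then show "q + s *s u + t *s v \<in> U"
      using e(2) by (auto simp: P_def)
  qed (use e in simp)
qed

text \<open>By Cauchy's formula the partial derivative is a circle integral of a function that depends
  holomorphically on the parameter.\<close>

lemma field_differentiable_partial_deriv:
  fixes G :: "complex \<Rightarrow> complex \<Rightarrow> complex"
  assumes R: "R > 0" and cont: "continuous_on (cball 0 R \<times> cball 0 R) (\<lambda>(s, t). G s t)"
    and hol_t: "\<And>s. s \<in> ball 0 R \<Longrightarrow> G s holomorphic_on ball 0 R"
    and hol_s: "\<And>t. t \<in> sphere 0 R \<Longrightarrow> (\<lambda>s. G s t) holomorphic_on ball 0 R"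
  shows "(\<lambda>s. deriv (G s) 0) field_differentiable (at 0)"
proof -
  define \<Psi> where "\<Psi> = (\<lambda>s. contour_integral (circlepath 0 R) (\<lambda>t. G s t / t\<^sup>2))"
  have Cauchy: "deriv (G s) 0 = \<Psi> s / (2 * of_real pi * \<i>)" if s: "s \<in> ball 0 R" for s
  proof -
    have "continuous_on (cball 0 R) (G s)"
      using s by (intro continuous_on_compose2[OF cont, of _ "\<lambda>t. (s, t)", simplified])
        (auto intro!: continuous_intros)
    then have "(G s has_field_derivative \<Psi> s / (2 * of_real pi * \<i>)) (at 0)"
      using Cauchy_derivative_integral_circlepath(2)[of 0 R "G s" 0] hol_t[OF s] R by (simp add: \<Psi>_def)
    then show ?thesis
      by (rule DERIV_imp_deriv)
  qed
  have "\<Psi> holomorphic_on ball 0 R"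
    unfolding \<Psi>_def
  proof (rule holomorphic_on_contour_integral_circlepath_param)
    have "continuous_on (ball 0 R \<times> sphere 0 R) (\<lambda>(s, t). G s t)"
      by (rule continuous_on_subset[OF cont]) auto
    moreover have "continuous_on (ball 0 R \<times> sphere 0 R) (\<lambda>(s, t::complex). t\<^sup>2)"
      by (auto simp: split_beta intro!: continuous_intros)
    ultimately show "continuous_on (ball 0 R \<times> sphere 0 R) (\<lambda>(s, t). G s t / t\<^sup>2)"
      using R by (auto simp: split_beta intro!: continuous_on_divide)
    show "(\<lambda>s. G s t / t\<^sup>2) holomorphic_on ball 0 R" if "t \<in> sphere 0 R" for t
      using hol_s[OF that] that R by (intro holomorphic_intros) auto
  qed (use R in auto)
  then have "(\<lambda>s. \<Psi> s / (2 * of_real pi * \<i>)) field_differentiable (at 0)"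
    using R by (intro field_differentiable_divide field_differentiable_const
        holomorphic_on_imp_differentiable_at[of _ "ball 0 R"]) auto
  then show ?thesis
    by (rule field_differentiable_transform_within[OF R UNIV_I, rotated]) (simp add: Cauchy dist_norm)
qed

lemma holo_fun_deriv_field_differentiable:
  fixes g :: "complex^'m \<Rightarrow> complex"
  assumes g: "holo_fun U g" and U: "open U" "q \<in> U"
  shows "(\<lambda>s. frechet_derivative g (at (q + s *s u)) v) field_differentiable (at 0)"
proof -
  obtain R where R: "R > 0" and inU: "\<And>s t. norm s \<le> R \<Longrightarrow> norm t \<le> R \<Longrightarrow> q + s *s u + t *s v \<in> U"
    using open_contains_complex_bidisc[OF U] by blast
  define G where "G = (\<lambda>s t. g (q + s *s u + t *s v))"
  have G_deriv_t: "(G s has_field_derivative frechet_derivative g (at (q + s *s u + t *s v)) v) (at t)"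
    if "norm s \<le> R" "norm t \<le> R" for s t
    using holo_fun_has_field_derivative_line[OF g, of "q + s *s u" t v] inU[OF that] by (simp add: G_def)
  have diff: "(\<lambda>s. deriv (G s) 0) field_differentiable (at 0)"
  proof (rule field_differentiable_partial_deriv[OF R])
    show "continuous_on (cball 0 R \<times> cball 0 R) (\<lambda>(s, t). G s t)"
      unfolding G_def split_beta
      by (rule continuous_on_compose2[OF holo_fun_continuous_on[OF g]],
          intro continuous_intros bounded_linear.continuous_on
            [OF bounded_bilinear.bounded_linear_left[OF bounded_bilinear_vector_smult]])
         (auto intro: inU)
    show "G s holomorphic_on ball 0 R" if "s \<in> ball 0 R" for s
      unfolding holomorphic_on_def field_differentiable_def
      using that G_deriv_t by (meson has_field_derivative_at_within less_imp_le mem_ball_0)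
    fix t :: complex assume t: "t \<in> sphere 0 R"
    have swap: "q + s *s u + t *s v = (q + t *s v) + s *s u" for s
      by (simp only: add_ac)
    have "((\<lambda>s. G s t) has_field_derivative frechet_derivative g (at (q + t *s v + s *s u)) u) (at s)"
      if "s \<in> ball 0 R" for s
      using holo_fun_has_field_derivative_line[OF g, of "q + t *s v" s u] inU[of s t] that t
      unfolding G_def swap by simp
    then show "(\<lambda>s. G s t) holomorphic_on ball 0 R"
      unfolding holomorphic_on_def field_differentiable_def by (meson has_field_derivative_at_within)
  qed
  have "deriv (G s) 0 = frechet_derivative g (at (q + s *s u)) v" if "s \<in> ball 0 R" for s
    using DERIV_imp_deriv[OF G_deriv_t[of s 0]] that R by simp
  then show ?thesis
    by (intro field_differentiable_transform_within[OF R UNIV_I _ diff]) (simp add: dist_norm)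
qed

section \<open>The hermitian form gamma_hat and hermitian block forms\<close>

definition smult_hat :: "complex \<Rightarrow> complex \<times> complex \<times> (complex^'n) \<times> (complex^'n)
    \<Rightarrow> complex \<times> complex \<times> (complex^'n) \<times> (complex^'n)" where
  "smult_hat c X = (case X of (x0, y0, x, y) \<Rightarrow> (c * x0, c * y0, c *s x, c *s y))"

lemma smult_hat_apply [simp]: "smult_hat c (x0, y0, x, y) = (c * x0, c * y0, c *s x, c *s y)"
  by (simp add: smult_hat_def)

lemma gamma_hat_expand:
  "gamma_hat (a0, a1, az, aw) (b0, b1, bz, bw) =
     \<i> * (a0 * cnj b1 - cnj b0 * a1 + (\<Sum>i\<in>UNIV. az$i * cnj (bw$i) - cnj (bz$i) * aw$i))"
  by (simp add: gamma_hat_def Omega_hat_def Omega_def)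

lemma gamma_hat_add_left: "gamma_hat (X + X') Y = gamma_hat X Y + gamma_hat X' Y"
  by (cases X; cases X'; cases Y) (simp add: gamma_hat_expand sum.distrib sum_subtractf algebra_simps)

lemma gamma_hat_add_right: "gamma_hat X (Y + Y') = gamma_hat X Y + gamma_hat X Y'"
  by (cases X; cases Y; cases Y') (simp add: gamma_hat_expand sum.distrib sum_subtractf algebra_simps)

lemma gamma_hat_smult_left: "gamma_hat (smult_hat c X) Y = c * gamma_hat X Y"
  by (cases X; cases Y) (simp add: gamma_hat_expand sum_distrib_left algebra_simps)

lemma gamma_hat_smult_right: "gamma_hat X (smult_hat c Y) = cnj c * gamma_hat X Y"
  by (cases X; cases Y) (simp add: gamma_hat_expand sum_distrib_left algebra_simps)

lemma cnj_gamma_hat: "cnj (gamma_hat X Y) = gamma_hat Y X"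
  by (cases X; cases Y) (simp add: gamma_hat_expand sum_subtractf algebra_simps)

lemma gamma_hat_zero_left [simp]: "gamma_hat 0 Y = 0"
  by (cases Y) (simp add: zero_prod_def gamma_hat_expand)

lemma gamma_hat_zero_right [simp]: "gamma_hat X 0 = 0"
  by (cases X) (simp add: zero_prod_def gamma_hat_expand)

lemma gamma_hat_sum_left: "gamma_hat (\<Sum>a\<in>A. X a) Y = (\<Sum>a\<in>A. gamma_hat (X a) Y)"
  by (induction A rule: infinite_finite_induct) (auto simp: gamma_hat_add_left)

lemma gamma_hat_sum_right: "gamma_hat Y (\<Sum>a\<in>A. X a) = (\<Sum>a\<in>A. gamma_hat Y (X a))"
  by (induction A rule: infinite_finite_induct) (auto simp: gamma_hat_add_right)

text \<open>Testing against \<i> y recovers the real part of L from its imaginary part.\<close>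

lemma nondeg_imaginary_part_iff:
  fixes L :: "complex^'m \<Rightarrow> complex^'m \<Rightarrow> complex"
  assumes L: "\<And>x y. L x (\<i> *s y) = - \<i> * L x y"
  shows "nondeg (\<lambda>x y. \<i> / 2 * (L x y - cnj (L x y))) \<longleftrightarrow> nondeg L"
proof -
  have "(\<forall>y. \<i> / 2 * (L x y - cnj (L x y)) = 0) \<longleftrightarrow> (\<forall>y. L x y = 0)" for x
  proof
    assume H: "\<forall>y. \<i> / 2 * (L x y - cnj (L x y)) = 0"
    show "\<forall>y. L x y = 0"
    proof
      fix y
      have "L x y = cnj (L x y)" "L x (\<i> *s y) = cnj (L x (\<i> *s y))"
        using H[rule_format, of y] H[rule_format, of "\<i> *s y"] by simp_all
      then show "L x y = 0"
        by (simp add: L)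
    qed
  qed simp
  then show ?thesis
    by (simp add: nondeg_def)
qed

text \<open>The right-hand side is the Schur complement of the corner k; a kernel vector x of it gives
  the kernel vector (- z0 d x / k, x) of the block form.\<close>

lemma nondeg_block_form_iff:
  fixes d e :: "'v::zero \<Rightarrow> complex" and G :: "'v \<Rightarrow> 'v \<Rightarrow> complex"
  assumes k: "k \<noteq> 0" and z0: "z0 \<noteq> 0"
    and zero: "d 0 = 0" "e 0 = 0" "\<And>x. G x 0 = 0"
  shows "nondeg (\<lambda>X Y. fst X * cnj (fst Y) * k + fst X * cnj z0 * e (snd Y)
                       + z0 * cnj (fst Y) * d (snd X) + z0 * cnj z0 * G (snd X) (snd Y))
     \<longleftrightarrow> nondeg (\<lambda>x y. G x y - d x * e y / k)"
    (is "nondeg ?B \<longleftrightarrow> nondeg ?S")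
proof -
  have zz: "z0 * cnj z0 \<noteq> 0"
    using z0 by simp
  have B_witness: "?B (- z0 * d x / k, x) (y0, y) = z0 * cnj z0 * ?S x y" for x y y0
    using k by (simp add: field_simps)
  show ?thesis
  proof
    assume B: "nondeg ?B"
    show "nondeg ?S"
      unfolding nondeg_def
    proof (intro allI impI)
      fix x assume S0: "\<forall>y. ?S x y = 0"
      have "?B (- z0 * d x / k, x) Y = 0" for Y
      proof -
        obtain y0 y where "Y = (y0, y)"
          by (cases Y)
        then show ?thesis
          using B_witness[of x y0 y] S0 by simp
      qed
      then have "(- z0 * d x / k, x) = 0"
        using B unfolding nondeg_def by blast
      then show "x = 0"
        by (simp add: zero_prod_def)
    qed
  next
    assume S: "nondeg ?S"
    show "nondeg ?B"
      unfolding nondeg_def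
    proof (intro allI impI)
      fix X assume B0: "\<forall>Y. ?B X Y = 0"
      obtain x0 x where X: "X = (x0, x)"
        by (cases X)
      have "x0 * k + z0 * d x = 0"
        using B0[rule_format, of "(1, 0)"] zero by (simp add: X)
      then have x0: "x0 = - z0 * d x / k"
        using k by (simp add: field_simps add_eq_0_iff2)
      have "z0 * cnj z0 * ?S x y = 0" for y
        using B0[rule_format, of "(0, y)"] unfolding X x0 B_witness .
      then have "\<forall>y. ?S x y = 0"
        using zz by simp
      then have "x = 0"
        using S unfolding nondeg_def by blast
      moreover have "x0 = 0"
        using x0 zero(1) \<open>x = 0\<close> by simp
      ultimately show "X = 0"
        by (simp add: X zero_prod_def)
    qed
  qed
qed

section \<open>Derivatives along real lines\<close>

lemma has_real_derivative_ln_abs: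
  assumes "(y::real) \<noteq> 0"
  shows "((\<lambda>x. ln \<bar>x\<bar>) has_real_derivative 1 / y) (at y)"
proof (cases "y > 0")
  case True
  show ?thesis
    by (rule has_field_derivative_transform_within_open[OF DERIV_ln_divide[OF True], of "{0<..}"])
       (use True in auto)
next
  case False
  with assms have y: "y < 0"
    by simp
  have "((\<lambda>x. ln (- x)) has_real_derivative 1 / (- y) * (- 1)) (at y)"
    by (rule DERIV_chain'[OF _ DERIV_ln_divide], auto intro!: derivative_eq_intros simp: y)
  then have "((\<lambda>x. ln (- x)) has_real_derivative 1 / y) (at y)"
    by simp
  then show ?thesis
    by (rule has_field_derivative_transform_within_open[of _ _ _ "{..<0}"]) (use y in auto)
qed

lemma has_vector_derivative_divide_complex:
  fixes f g :: "real \<Rightarrow> complex"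
  assumes "(f has_vector_derivative f') (at t)" "(g has_vector_derivative g') (at t)" "g t \<noteq> 0"
  shows "((\<lambda>s. f s / g s) has_vector_derivative (f' * g t - f t * g') / (g t * g t)) (at t)"
proof -
  have "((\<lambda>s. f s / g s) has_derivative (\<lambda>h. ((h *\<^sub>R f') * g t - f t * (h *\<^sub>R g')) / (g t * g t))) (at t)"
    using has_derivative_divide'[OF assms(1,2)[unfolded has_vector_derivative_def] assms(3)] .
  then show ?thesis
    unfolding has_vector_derivative_def
    by (rule has_derivative_eq_rhs) (auto simp: fun_eq_iff scaleR_conv_of_real algebra_simps)
qed

lemma has_vector_derivative_holo_fun_line:
  assumes "holo_fun U g" "q \<in> U"
  shows "((\<lambda>t. g (q + t *\<^sub>R v)) has_vector_derivative frechet_derivative g (at q) v) (at 0)"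
proof -
  have line: "((\<lambda>t::real. q + t *\<^sub>R v) has_derivative (\<lambda>h. h *\<^sub>R v)) (at 0)"
    using has_derivative_add[OF has_derivative_const
        bounded_linear_imp_has_derivative[OF bounded_linear_scaleR_left]] by simp
  moreover have "(g has_derivative frechet_derivative g (at q)) (at (q + 0 *\<^sub>R v))"
    using holo_fun_has_derivative[OF assms] by simp
  ultimately have "((\<lambda>t. g (q + t *\<^sub>R v)) has_derivative (\<lambda>h. frechet_derivative g (at q) (h *\<^sub>R v))) (at 0)"
    by (rule has_derivative_compose)
  then show ?thesis
    unfolding has_vector_derivative_def
    by (simp add: linear_scale[OF has_derivative_linear[OF holo_fun_has_derivative[OF assms]]])
qed

lemma holo_fun_deriv_has_vector_derivative_complex_line:
  fixes g :: "complex^'m \<Rightarrow> complex"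
  assumes "holo_fun U g" "open U" "p \<in> U"
  obtains c where
    "((\<lambda>t. frechet_derivative g (at (p + t *\<^sub>R e)) u) has_vector_derivative c) (at 0)"
    "((\<lambda>t. frechet_derivative g (at (p + t *\<^sub>R (\<i> *s e))) u) has_vector_derivative \<i> * c) (at 0)"
proof -
  obtain c where c: "((\<lambda>s. frechet_derivative g (at (p + s *s e)) u) has_field_derivative c) (at 0)"
    using holo_fun_deriv_field_differentiable[OF assms, of e u] by (auto simp: field_differentiable_def)
  have real_line: "((\<lambda>t. frechet_derivative g (at (p + complex_of_real t *s e)) u) has_vector_derivative c) (at 0)"
    using has_vector_derivative_real_field[of _ c 0] c by simp
  have "((\<lambda>s. \<i> * s) has_field_derivative \<i>) (at 0)"
    by (auto intro!: derivative_eq_intros)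
  moreover have "((\<lambda>s. frechet_derivative g (at (p + s *s e)) u) has_field_derivative c) (at (\<i> * 0))"
    using c by simp
  ultimately have "((\<lambda>s. frechet_derivative g (at (p + (\<i> * s) *s e)) u) has_field_derivative c * \<i>) (at 0)"
    by (rule DERIV_chain')
  then have imag_line: "((\<lambda>t. frechet_derivative g (at (p + (\<i> * complex_of_real t) *s e)) u)
      has_vector_derivative c * \<i>) (at 0)"
    using has_vector_derivative_real_field[of _ "c * \<i>" 0] by simp
  have "complex_of_real t *s e = t *\<^sub>R e" "(\<i> * complex_of_real t) *s e = t *\<^sub>R (\<i> *s e)" for t
    unfolding vec_eq_iff vector_smult_component vector_scaleR_component
    by (simp_all add: scaleR_conv_of_real)
  with real_line imag_line show ?thesis
    by (intro that) (auto simp: mult.commute)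
qed

lemma has_vector_derivative_gamma_hat:
  assumes "(a0 has_vector_derivative a0') (at t)" "(a1 has_vector_derivative a1') (at t)"
    "\<And>i. ((\<lambda>s. az s $ i) has_vector_derivative az' $ i) (at t)"
    "\<And>i. ((\<lambda>s. aw s $ i) has_vector_derivative aw' $ i) (at t)"
    "(b0 has_vector_derivative b0') (at t)" "(b1 has_vector_derivative b1') (at t)"
    "\<And>i. ((\<lambda>s. bz s $ i) has_vector_derivative bz' $ i) (at t)"
    "\<And>i. ((\<lambda>s. bw s $ i) has_vector_derivative bw' $ i) (at t)"
  shows "((\<lambda>s. gamma_hat (a0 s, a1 s, az s, aw s) (b0 s, b1 s, bz s, bw s)) has_vector_derivative
    gamma_hat (a0', a1', az', aw') (b0 t, b1 t, bz t, bw t)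
      + gamma_hat (a0 t, a1 t, az t, aw t) (b0', b1', bz', bw')) (at t)"
  unfolding gamma_hat_expand
  by (rule has_vector_derivative_eq_rhs, (rule derivative_intros assms)+)
     (simp add: sum.distrib sum_subtractf algebra_simps)

section \<open>The lift of a holomorphic pair\<close>

locale holomorphic_pair =
  fixes U :: "(complex^'m) set" and z w :: "complex^'m \<Rightarrow> complex^'n" and F :: "complex^'m \<Rightarrow> complex"
  assumes open_U: "open U" and holo_z: "holo_vec U z" and holo_w: "holo_vec U w"
    and holo_F: "holo_fun U F"
begin

abbreviation "f \<equiv> fpot z w F"
abbreviation "z_nth i \<equiv> (\<lambda>q. z q $ i)"
abbreviation "w_nth i \<equiv> (\<lambda>q. w q $ i)"
abbreviation "D g q v \<equiv> frechet_derivative g (at q) v"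

lemma holo_f: "holo_fun U f"
  by (rule holo_fun_fpot[OF holo_z holo_w holo_F])

lemma holo_z_nth: "holo_fun U (z_nth i)"
  by (rule holo_fun_holo_vec_nth[OF holo_z])

lemma holo_w_nth: "holo_fun U (w_nth i)"
  by (rule holo_fun_holo_vec_nth[OF holo_w])

definition lift :: "complex^'m \<Rightarrow> complex \<times> complex \<times> (complex^'n) \<times> (complex^'n)" where
  "lift q = (1, f q, z q, w q)"

definition dlift :: "complex^'m \<Rightarrow> complex^'m \<Rightarrow> complex \<times> complex \<times> (complex^'n) \<times> (complex^'n)" where
  "dlift q v = (0, D f q v, \<chi> i. D (z_nth i) q v, \<chi> i. D (w_nth i) q v)"

definition pot :: "complex^'m \<Rightarrow> real" where
  "pot q = Im (f q) + Kpot z w q"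

definition log_pot :: "complex^'m \<Rightarrow> complex" where
  "log_pot q = complex_of_real (ln \<bar>pot q\<bar>)"

definition kappa :: "complex^'m \<Rightarrow> complex" where
  "kappa q = gamma_hat (lift q) (lift q)"

definition schur :: "complex^'m \<Rightarrow> complex^'m \<Rightarrow> complex^'m \<Rightarrow> complex" where
  "schur q x y = gamma_hat (dlift q x) (dlift q y)
     - gamma_hat (dlift q x) (lift q) * gamma_hat (lift q) (dlift q y) / kappa q"

lemma conif_eq_smult_hat_lift: "conif z w F (z0, p) = smult_hat z0 (lift p)"
  by (simp add: conif_def lift_def)

lemma has_derivative_conif:
  assumes p: "p \<in> U"
  shows "(conif z w F has_derivative (\<lambda>X. smult_hat (fst X) (lift p) + smult_hat z0 (dlift p (snd X))))
           (at (z0, p))"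
proof -
  have conif: "conif z w F = (\<lambda>X. (fst X, fst X * f (snd X), fst X *s z (snd X), fst X *s w (snd X)))"
    by (auto simp: conif_def fun_eq_iff split: prod.splits)
  have snd': "(snd has_derivative snd) (at (z0, p))" and fst': "(fst has_derivative fst) (at (z0, p))"
    by (auto intro: has_derivative_snd has_derivative_fst has_derivative_ident)
  have df: "((\<lambda>X. f (snd X)) has_derivative (\<lambda>X. D f p (snd X))) (at (z0, p))"
    using has_derivative_compose[OF snd', of f] holo_fun_has_derivative[OF holo_f p] by simp
  have dz: "((\<lambda>X. z (snd X)) has_derivative (\<lambda>X. D z p (snd X))) (at (z0, p))"
    using has_derivative_compose[OF snd', of z] holo_vec_has_derivative[OF holo_z p] by simp
  have dw: "((\<lambda>X. w (snd X)) has_derivative (\<lambda>X. D w p (snd X))) (at (z0, p))"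
    using has_derivative_compose[OF snd', of w] holo_vec_has_derivative[OF holo_w p] by simp
  have "(conif z w F has_derivative (\<lambda>h. (fst h, z0 * D f p (snd h) + fst h * f p,
          z0 *s D z p (snd h) + fst h *s z p, z0 *s D w p (snd h) + fst h *s w p))) (at (z0, p))"
    unfolding conif
    by (intro has_derivative_Pair fst' has_derivative_mult[OF fst' df, THEN has_derivative_eq_rhs]
        bounded_bilinear.FDERIV[OF bounded_bilinear_vector_smult fst' dz, THEN has_derivative_eq_rhs]
        bounded_bilinear.FDERIV[OF bounded_bilinear_vector_smult fst' dw, THEN has_derivative_eq_rhs])
       (simp_all add: fun_eq_iff)
  then show ?thesis
    by (rule has_derivative_eq_rhs)
       (auto simp: fun_eq_iff lift_def dlift_def vec_eq_iff frechet_derivative_holo_vec_nth[OF holo_z p]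
         frechet_derivative_holo_vec_nth[OF holo_w p] algebra_simps)
qed

lemma frechet_derivative_conif:
  "p \<in> U \<Longrightarrow> frechet_derivative (conif z w F) (at (z0, p)) X
     = smult_hat (fst X) (lift p) + smult_hat z0 (dlift p (snd X))"
  by (simp add: frechet_derivative_at[OF has_derivative_conif, symmetric])

lemma kappa_eq_pot: "kappa q = complex_of_real (2 * pot q)"
proof -
  define S where "S = (\<Sum>i\<in>UNIV. z q $ i * cnj (w q $ i) - cnj (z q $ i) * w q $ i)"
  have "Re S = 0"
    unfolding S_def by (simp add: Re_sum)
  moreover have "Kpot z w q = - Im S / 2"
    by (simp add: Kpot_def gamma_def Omega_def conj_pt_def S_def)
  ultimately show ?thesis
    by (simp add: kappa_def pot_def lift_def gamma_hat_expand complex_eq_iff flip: S_def)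
qed

lemma cnj_kappa: "cnj (kappa q) = kappa q"
  by (simp add: kappa_eq_pot)

lemma pot_continuous_on: "continuous_on U pot"
proof -
  have "pot = (\<lambda>q. Im (f q) + Re (\<i> * (\<Sum>i\<in>UNIV. z_nth i q * cnj (w_nth i q) - cnj (z_nth i q) * w_nth i q) / 2))"
    by (simp add: fun_eq_iff pot_def Kpot_def gamma_def Omega_def conj_pt_def)
  then show ?thesis
    by (simp only:) (intro continuous_intros holo_fun_continuous_on holo_vec_continuous_on holo_f
        holo_z_nth holo_w_nth holo_z holo_w; simp)
qed

lemma dlift_smult: "q \<in> U \<Longrightarrow> dlift q (c *s v) = smult_hat c (dlift q v)"
  by (simp add: dlift_def vec_eq_iff holo_fun_deriv_smult[OF holo_f] holo_fun_deriv_smult[OF holo_z_nth]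
      holo_fun_deriv_smult[OF holo_w_nth])

lemma dlift_expand:
  assumes q: "q \<in> U"
  shows "dlift q x = (\<Sum>a\<in>UNIV. smult_hat (x$a) (dlift q (axis a 1)))"
proof -
  have "dlift q x = (0, \<Sum>a\<in>UNIV. x$a * D f q (axis a 1),
      \<Sum>a\<in>UNIV. x$a *s (\<chi> i. D (z_nth i) q (axis a 1)), \<Sum>a\<in>UNIV. x$a *s (\<chi> i. D (w_nth i) q (axis a 1)))"
    unfolding dlift_def
    by (simp add: holo_fun_deriv_expand[OF holo_f q, of x] holo_fun_deriv_expand[OF holo_z_nth q, of _ x]
        holo_fun_deriv_expand[OF holo_w_nth q, of _ x] vec_eq_iff)
  also have "\<dots> = (\<Sum>a\<in>UNIV. smult_hat (x$a) (dlift q (axis a 1)))"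
    by (simp add: dlift_def prod_eq_iff fst_sum snd_sum)
  finally show ?thesis .
qed

lemma dlift_zero: "q \<in> U \<Longrightarrow> dlift q 0 = 0"
  using dlift_smult[of q 0 0] by (cases "dlift q 0") (simp add: zero_prod_def)

lemma schur_expand:
  assumes q: "q \<in> U"
  shows "schur q x y = (\<Sum>a\<in>UNIV. \<Sum>b\<in>UNIV. x$a * cnj (y$b) * schur q (axis a 1) (axis b 1))"
proof -
  have "gamma_hat (dlift q x) (dlift q y) = (\<Sum>a\<in>UNIV. x$a * gamma_hat (dlift q (axis a 1)) (dlift q y))"
    by (subst dlift_expand[OF q, of x]) (simp add: gamma_hat_sum_left gamma_hat_smult_left)
  also have "\<dots> = (\<Sum>a\<in>UNIV. \<Sum>b\<in>UNIV.
      x$a * (cnj (y$b) * gamma_hat (dlift q (axis a 1)) (dlift q (axis b 1))))"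
    by (subst dlift_expand[OF q, of y]) (simp add: gamma_hat_sum_right gamma_hat_smult_right sum_distrib_left)
  finally have G: "gamma_hat (dlift q x) (dlift q y) = \<dots>" .
  have d: "gamma_hat (dlift q x) (lift q) = (\<Sum>a\<in>UNIV. x$a * gamma_hat (dlift q (axis a 1)) (lift q))"
    by (subst dlift_expand[OF q]) (simp add: gamma_hat_sum_left gamma_hat_smult_left)
  have e: "gamma_hat (lift q) (dlift q y) = (\<Sum>b\<in>UNIV. cnj (y$b) * gamma_hat (lift q) (dlift q (axis b 1)))"
    by (subst dlift_expand[OF q]) (simp add: gamma_hat_sum_right gamma_hat_smult_right)
  show ?thesis
    unfolding schur_def G d e sum_product
    by (simp add: sum_subtractf sum_divide_distrib right_diff_distrib algebra_simps)
qed

lemma cnj_schur: "cnj (schur q x y) = schur q y x"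
  by (simp add: schur_def cnj_gamma_hat cnj_kappa mult.commute)

lemma schur_smult_right: "q \<in> U \<Longrightarrow> schur q x (\<i> *s y) = - \<i> * schur q x y"
  by (simp add: schur_def dlift_smult gamma_hat_smult_right algebra_simps)

lemma has_vector_derivative_gamma_hat_lift:
  assumes q: "q \<in> U"
    and d0: "((\<lambda>t. fst (Y t)) has_vector_derivative fst Y') (at 0)"
    and d1: "((\<lambda>t. fst (snd (Y t))) has_vector_derivative fst (snd Y')) (at 0)"
    and d2: "\<And>i. ((\<lambda>t. fst (snd (snd (Y t))) $ i) has_vector_derivative fst (snd (snd Y')) $ i) (at 0)"
    and d3: "\<And>i. ((\<lambda>t. snd (snd (snd (Y t))) $ i) has_vector_derivative snd (snd (snd Y')) $ i) (at 0)"
  shows "((\<lambda>t. gamma_hat (lift (q + t *\<^sub>R v)) (Y t)) has_vector_derivative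
           gamma_hat (dlift q v) (Y 0) + gamma_hat (lift q) Y') (at 0)"
proof -
  have "((\<lambda>t. gamma_hat (1, f (q + t *\<^sub>R v), z (q + t *\<^sub>R v), w (q + t *\<^sub>R v))
        (fst (Y t), fst (snd (Y t)), fst (snd (snd (Y t))), snd (snd (snd (Y t))))) has_vector_derivative
      gamma_hat (0, D f q v, \<chi> i. D (z_nth i) q v, \<chi> i. D (w_nth i) q v)
        (fst (Y 0), fst (snd (Y 0)), fst (snd (snd (Y 0))), snd (snd (snd (Y 0)))) +
      gamma_hat (1, f (q + 0 *\<^sub>R v), z (q + 0 *\<^sub>R v), w (q + 0 *\<^sub>R v))
        (fst Y', fst (snd Y'), fst (snd (snd Y')), snd (snd (snd Y')))) (at 0)"
    by (rule has_vector_derivative_gamma_hat)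
       (use d0 d1 d2 d3 has_vector_derivative_holo_fun_line[OF holo_f q]
         has_vector_derivative_holo_fun_line[OF holo_z_nth q]
         has_vector_derivative_holo_fun_line[OF holo_w_nth q] in auto)
  then show ?thesis
    by (simp add: lift_def dlift_def)
qed

lemma has_vector_derivative_kappa:
  assumes q: "q \<in> U"
  shows "((\<lambda>t. kappa (q + t *\<^sub>R v)) has_vector_derivative
     gamma_hat (dlift q v) (lift q) + gamma_hat (lift q) (dlift q v)) (at 0)"
proof -
  have "((\<lambda>t. gamma_hat (lift (q + t *\<^sub>R v)) (lift (q + t *\<^sub>R v))) has_vector_derivative
      gamma_hat (dlift q v) (lift (q + 0 *\<^sub>R v)) + gamma_hat (lift q) (dlift q v)) (at 0)"
    by (rule has_vector_derivative_gamma_hat_lift[OF q])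
       (use has_vector_derivative_holo_fun_line[OF holo_f q] has_vector_derivative_holo_fun_line[OF holo_z_nth q]
         has_vector_derivative_holo_fun_line[OF holo_w_nth q] in \<open>auto simp: lift_def dlift_def\<close>)
  then show ?thesis
    by (simp add: kappa_def)
qed

lemma dir_deriv_log_pot:
  assumes q: "q \<in> U" and pot: "pot q \<noteq> 0"
  shows "dir_deriv log_pot q v = (gamma_hat (dlift q v) (lift q) + gamma_hat (lift q) (dlift q v)) / kappa q"
proof -
  define \<kappa>' where "\<kappa>' = gamma_hat (dlift q v) (lift q) + gamma_hat (lift q) (dlift q v)"
  have "cnj \<kappa>' = \<kappa>'"
    unfolding \<kappa>'_def by (simp add: cnj_gamma_hat add.commute)
  then have real: "\<kappa>' = complex_of_real (Re \<kappa>')"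
    by (metis Reals_cnj_iff of_real_Re)
  have "((\<lambda>t. Re (kappa (q + t *\<^sub>R v) / 2)) has_vector_derivative Re (\<kappa>' / 2)) (at 0)"
    using has_vector_derivative_kappa[OF q, of v] unfolding \<kappa>'_def
    by (intro bounded_linear.has_vector_derivative[OF bounded_linear_Re] derivative_intros)
  then have "((\<lambda>t. pot (q + t *\<^sub>R v)) has_real_derivative Re \<kappa>' / 2) (at 0)"
    by (simp add: kappa_eq_pot has_real_derivative_iff_has_vector_derivative)
  moreover have "((\<lambda>x. ln \<bar>x\<bar>) has_real_derivative 1 / pot q) (at (pot (q + 0 *\<^sub>R v)))"
    using has_real_derivative_ln_abs[OF pot] by simp
  ultimately have "((\<lambda>t. ln \<bar>pot (q + t *\<^sub>R v)\<bar>) has_real_derivative 1 / pot q * (Re \<kappa>' / 2)) (at 0)"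
    by (rule DERIV_chain')
  then have "dir_deriv log_pot q v = complex_of_real (1 / pot q * (Re \<kappa>' / 2))"
    unfolding dir_deriv_def log_pot_def
    by (intro vector_derivative_at has_vector_derivative_of_real)
  also have "\<dots> = \<kappa>' / kappa q"
    by (subst real) (simp add: kappa_eq_pot pot field_simps)
  finally show ?thesis
    by (simp add: \<kappa>'_def)
qed

lemma wirt_dbar_log_pot:
  assumes q: "q \<in> U" and pot: "pot q \<noteq> 0"
  shows "wirt_dbar b log_pot q = gamma_hat (lift q) (dlift q (axis b 1)) / kappa q"
  using pot
  unfolding wirt_dbar_def dir_deriv_log_pot[OF q pot] axis_i_eq dlift_smult[OF q] gamma_hat_smult_left
    gamma_hat_smult_right
  by (simp add: kappa_eq_pot field_simps)

lemma dir_deriv_wirt_dbar_log_pot: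
  assumes p: "p \<in> U" and pot: "pot p \<noteq> 0"
    and E': "((\<lambda>t. gamma_hat (lift (p + t *\<^sub>R v)) (dlift (p + t *\<^sub>R v) (axis b 1))) has_vector_derivative E') (at 0)"
  shows "dir_deriv (wirt_dbar b log_pot) p v
    = (E' * kappa p - gamma_hat (lift p) (dlift p (axis b 1))
         * (gamma_hat (dlift p v) (lift p) + gamma_hat (lift p) (dlift p v))) / (kappa p * kappa p)"
proof -
  define V where "V = U \<inter> pot -` (- {0})"
  have "open V"
    unfolding V_def by (rule continuous_open_preimage[OF pot_continuous_on open_U]) auto
  then have open_line: "open {t::real. p + t *\<^sub>R v \<in> V}"
    using continuous_open_preimage[OF _ open_UNIV, of "\<lambda>t::real. p + t *\<^sub>R v" V]
    by (simp add: vimage_def continuous_intros)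
  have "kappa p \<noteq> 0"
    by (simp add: kappa_eq_pot pot)
  then have "((\<lambda>t. gamma_hat (lift (p + t *\<^sub>R v)) (dlift (p + t *\<^sub>R v) (axis b 1)) / kappa (p + t *\<^sub>R v))
      has_vector_derivative (E' * kappa p - gamma_hat (lift p) (dlift p (axis b 1))
         * (gamma_hat (dlift p v) (lift p) + gamma_hat (lift p) (dlift p v))) / (kappa p * kappa p)) (at 0)"
    using has_vector_derivative_divide_complex[OF E' has_vector_derivative_kappa[OF p]] by simp
  then have "((\<lambda>t. wirt_dbar b log_pot (p + t *\<^sub>R v)) has_vector_derivative
      (E' * kappa p - gamma_hat (lift p) (dlift p (axis b 1))
         * (gamma_hat (dlift p v) (lift p) + gamma_hat (lift p) (dlift p v))) / (kappa p * kappa p)) (at 0)"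
    by (rule has_vector_derivative_transform_within_open[OF _ open_line])
       (use p pot wirt_dbar_log_pot in \<open>auto simp: V_def\<close>)
  then show ?thesis
    unfolding dir_deriv_def by (rule vector_derivative_at)
qed

lemma has_vector_derivative_gamma_hat_lift_dlift:
  assumes p: "p \<in> U"
  obtains C where
    "((\<lambda>t. gamma_hat (lift (p + t *\<^sub>R e)) (dlift (p + t *\<^sub>R e) u)) has_vector_derivative
       gamma_hat (dlift p e) (dlift p u) + gamma_hat (lift p) C) (at 0)"
    "((\<lambda>t. gamma_hat (lift (p + t *\<^sub>R (\<i> *s e))) (dlift (p + t *\<^sub>R (\<i> *s e)) u)) has_vector_derivative
       gamma_hat (dlift p (\<i> *s e)) (dlift p u) + gamma_hat (lift p) (smult_hat \<i> C)) (at 0)"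
proof -
  obtain cf where cf: "((\<lambda>t. D f (p + t *\<^sub>R e) u) has_vector_derivative cf) (at 0)"
      "((\<lambda>t. D f (p + t *\<^sub>R (\<i> *s e)) u) has_vector_derivative \<i> * cf) (at 0)"
    by (rule holo_fun_deriv_has_vector_derivative_complex_line[OF holo_f open_U p])
  have "\<exists>c. ((\<lambda>t. D (z_nth i) (p + t *\<^sub>R e) u) has_vector_derivative c) (at 0) \<and>
      ((\<lambda>t. D (z_nth i) (p + t *\<^sub>R (\<i> *s e)) u) has_vector_derivative \<i> * c) (at 0)" for i
    by (rule holo_fun_deriv_has_vector_derivative_complex_line[OF holo_z_nth open_U p]) blast
  then obtain cz where cz: "\<And>i. ((\<lambda>t. D (z_nth i) (p + t *\<^sub>R e) u) has_vector_derivative cz i) (at 0)"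
      "\<And>i. ((\<lambda>t. D (z_nth i) (p + t *\<^sub>R (\<i> *s e)) u) has_vector_derivative \<i> * cz i) (at 0)"
    by metis
  have "\<exists>c. ((\<lambda>t. D (w_nth i) (p + t *\<^sub>R e) u) has_vector_derivative c) (at 0) \<and>
      ((\<lambda>t. D (w_nth i) (p + t *\<^sub>R (\<i> *s e)) u) has_vector_derivative \<i> * c) (at 0)" for i
    by (rule holo_fun_deriv_has_vector_derivative_complex_line[OF holo_w_nth open_U p]) blast
  then obtain cw where cw: "\<And>i. ((\<lambda>t. D (w_nth i) (p + t *\<^sub>R e) u) has_vector_derivative cw i) (at 0)"
      "\<And>i. ((\<lambda>t. D (w_nth i) (p + t *\<^sub>R (\<i> *s e)) u) has_vector_derivative \<i> * cw i) (at 0)"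
    by metis
  define C where "C = (0::complex, cf, \<chi> i. cz i, \<chi> i. cw i)"
  show ?thesis
  proof (rule that[of C])
    show "((\<lambda>t. gamma_hat (lift (p + t *\<^sub>R e)) (dlift (p + t *\<^sub>R e) u)) has_vector_derivative
       gamma_hat (dlift p e) (dlift p u) + gamma_hat (lift p) C) (at 0)"
      using has_vector_derivative_gamma_hat_lift[OF p, of "\<lambda>t. dlift (p + t *\<^sub>R e) u" C e]
        cf(1) cz(1) cw(1) by (simp add: dlift_def C_def)
    show "((\<lambda>t. gamma_hat (lift (p + t *\<^sub>R (\<i> *s e))) (dlift (p + t *\<^sub>R (\<i> *s e)) u)) has_vector_derivative
       gamma_hat (dlift p (\<i> *s e)) (dlift p u) + gamma_hat (lift p) (smult_hat \<i> C)) (at 0)"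
      using has_vector_derivative_gamma_hat_lift[OF p, of "\<lambda>t. dlift (p + t *\<^sub>R (\<i> *s e)) u" "smult_hat \<i> C"]
        cf(2) cz(2) cw(2) by (simp add: dlift_def C_def)
  qed
qed

lemma wirt_d_wirt_dbar_log_pot:
  assumes p: "p \<in> U" and pot: "pot p \<noteq> 0"
  shows "wirt_d a (wirt_dbar b log_pot) p = schur p (axis a 1) (axis b 1) / kappa p"
proof -
  obtain C where
    E1: "((\<lambda>t. gamma_hat (lift (p + t *\<^sub>R axis a 1)) (dlift (p + t *\<^sub>R axis a 1) (axis b 1)))
      has_vector_derivative gamma_hat (dlift p (axis a 1)) (dlift p (axis b 1)) + gamma_hat (lift p) C) (at 0)"
    and E2: "((\<lambda>t. gamma_hat (lift (p + t *\<^sub>R (\<i> *s axis a 1))) (dlift (p + t *\<^sub>R (\<i> *s axis a 1)) (axis b 1)))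
      has_vector_derivative gamma_hat (dlift p (\<i> *s axis a 1)) (dlift p (axis b 1))
        + gamma_hat (lift p) (smult_hat \<i> C)) (at 0)"
    by (rule has_vector_derivative_gamma_hat_lift_dlift[OF p])
  have "kappa p \<noteq> 0"
    by (simp add: kappa_eq_pot pot)
  \<comment> \<open>the unknown second derivatives C of the lift cancel, since they enter the i-direction with
    the factor i\<close>
  then show ?thesis
    unfolding wirt_d_def axis_i_eq dir_deriv_wirt_dbar_log_pot[OF p pot E1]
      dir_deriv_wirt_dbar_log_pot[OF p pot E2] dlift_smult[OF p] gamma_hat_smult_left gamma_hat_smult_right
    by (simp add: schur_def field_simps)
qed

lemma omega_bar_eq_schur:
  assumes p: "p \<in> U" and pot: "pot p \<noteq> 0"
  shows "omega_bar z w F p x y = \<i> / 2 * (schur p x y / kappa p - cnj (schur p x y / kappa p))"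
proof -
  have "(\<lambda>q. complex_of_real (ln \<bar>Im (f q) + Kpot z w q\<bar>)) = log_pot"
    by (simp add: fun_eq_iff log_pot_def pot_def)
  then have "omega_bar z w F p x y = \<i> / 2 * (\<Sum>a\<in>UNIV. \<Sum>b\<in>UNIV.
      schur p (axis a 1) (axis b 1) / kappa p * (x$a * cnj (y$b) - y$a * cnj (x$b)))"
    by (simp add: omega_bar_def ddbar_def wirt_d_wirt_dbar_log_pot[OF p pot])
  also have "\<dots> = \<i> / 2 * (\<Sum>a\<in>UNIV. \<Sum>b\<in>UNIV.
      x$a * cnj (y$b) * schur p (axis a 1) (axis b 1) / kappa p
      - y$a * cnj (x$b) * schur p (axis a 1) (axis b 1) / kappa p)"
    by (intro arg_cong[where f = "\<lambda>s. \<i> / 2 * s"] sum.cong refl) (simp add: algebra_simps diff_divide_distrib)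
  also have "\<dots> = \<i> / 2 * (schur p x y / kappa p - schur p y x / kappa p)"
    unfolding schur_expand[OF p, of x y] schur_expand[OF p, of y x] sum_divide_distrib sum_subtractf ..
  also have "schur p y x / kappa p = cnj (schur p x y / kappa p)"
    by (simp add: cnj_schur cnj_kappa)
  finally show ?thesis .
qed

lemma gamma_hat_conif: "gamma_hat (conif z w F (z0, p)) (conif z w F (z0, p)) = z0 * cnj z0 * kappa p"
  by (simp add: conif_eq_smult_hat_lift gamma_hat_smult_left gamma_hat_smult_right kappa_def)

lemma gamma_hat_frechet_derivative_conif:
  assumes p: "p \<in> U"
  shows "gamma_hat (frechet_derivative (conif z w F) (at (z0, p)) X)
                   (frechet_derivative (conif z w F) (at (z0, p)) Y)
    = fst X * cnj (fst Y) * kappa p + fst X * cnj z0 * gamma_hat (lift p) (dlift p (snd Y))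
      + z0 * cnj (fst Y) * gamma_hat (dlift p (snd X)) (lift p)
      + z0 * cnj z0 * gamma_hat (dlift p (snd X)) (dlift p (snd Y))"
  by (simp add: frechet_derivative_conif[OF p] gamma_hat_add_left gamma_hat_add_right
      gamma_hat_smult_left gamma_hat_smult_right kappa_def algebra_simps)

lemma nondeg_pullback_conif_iff_schur:
  assumes p: "p \<in> U" and pot: "pot p \<noteq> 0" and z0: "z0 \<noteq> 0"
  shows "nondeg (\<lambda>X Y. gamma_hat (frechet_derivative (conif z w F) (at (z0, p)) X)
                                 (frechet_derivative (conif z w F) (at (z0, p)) Y))
         \<longleftrightarrow> nondeg (schur p)"
  unfolding gamma_hat_frechet_derivative_conif[OF p] schur_def[abs_def]
  by (rule nondeg_block_form_iff[OF _ z0]) (simp_all add: kappa_eq_pot pot dlift_zero[OF p])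

lemma nondeg_omega_bar_iff_schur:
  assumes p: "p \<in> U" and pot: "pot p \<noteq> 0"
  shows "nondeg (omega_bar z w F p) \<longleftrightarrow> nondeg (schur p)"
proof -
  have "nondeg (omega_bar z w F p) \<longleftrightarrow> nondeg (\<lambda>x y. schur p x y / kappa p)"
    unfolding omega_bar_eq_schur[OF p pot, abs_def]
    by (rule nondeg_imaginary_part_iff) (simp add: schur_smult_right[OF p])
  also have "\<dots> \<longleftrightarrow> nondeg (schur p)"
    using pot by (simp add: nondeg_def kappa_eq_pot)
  finally show ?thesis .
qed

lemma nondeg_conif_iff:
  assumes p: "p \<in> U"
  shows "(\<forall>z0. z0 \<noteq> 0 \<longrightarrow>
      nondeg (\<lambda>X Y. gamma_hat (frechet_derivative (conif z w F) (at (z0, p)) X)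
                               (frechet_derivative (conif z w F) (at (z0, p)) Y)) \<and>
      gamma_hat (conif z w F (z0, p)) (conif z w F (z0, p)) \<noteq> 0)
    \<longleftrightarrow> (Im (fpot z w F p) + Kpot z w p \<noteq> 0 \<and> nondeg (omega_bar z w F p))"
proof (cases "pot p = 0")
  case True
  then have "gamma_hat (conif z w F (1, p)) (conif z w F (1, p)) = 0"
    by (simp add: gamma_hat_conif kappa_eq_pot)
  moreover have "Im (fpot z w F p) + Kpot z w p = 0"
    using True by (simp add: pot_def)
  ultimately show ?thesis
    by (metis one_neq_zero)
next
  case False
  moreover have "kappa p \<noteq> 0"
    using False by (simp add: kappa_eq_pot)
  ultimately show ?thesis
    using nondeg_pullback_conif_iff_schur[OF p False] nondeg_omega_bar_iff_schur[OF p False]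
    by (auto simp: gamma_hat_conif pot_def)
qed

end

theorem mainTheorem12:
  fixes U :: "(complex^'m) set"
    and z w :: "complex^'m \<Rightarrow> complex^'n"
    and F :: "complex^'m \<Rightarrow> complex"
  assumes "CARD('m) = CARD('n)" and "sk_pair U z w F"
  shows "sk_nondegenerate U z w F \<longleftrightarrow>
           ((\<forall>p\<in>U. Im (fpot z w F p) + Kpot z w p \<noteq> 0) \<and>
            (\<forall>p\<in>U. nondeg (omega_bar z w F p)))"
proof -
  interpret holomorphic_pair U z w F
    using assms(2) by unfold_locales (auto simp: sk_pair_def)
  show ?thesis
    unfolding sk_nondegenerate_def using nondeg_conif_iff by blast
qed

end
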